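(* Let $K=\mathbb{Q}(\sqrt m)$ be a Deng–Li field and write its fundamental unit as $\varepsilon=a+b\sqrt m$ with $a,b\in\mathbb{Z}$. Then $b$ is odd.
   Context: A Deng–Li field is $K=\mathbb{Q}(\sqrt m)$, $m=\ell_1\ell_2\cdots\ell_n$ with $n\ge 2$ even and $\ell_1,\dots,\ell_n$ distinct primes such that: - $\ell_1\equiv3\pmod8$; - $\ell_i\equiv5\pmod8$ for $i\ge2$; - $\big(\frac{\ell_1}{\ell_2}\big)=-1$, and $\big(\frac{\ell_1}{\ell_j}\big)=1$ for $j\ge3$; - $\big(\frac{\ell_i}{\ell_j}\big)=-1$ for $2\le i<j\le n$ (Legendre symbols). Here $m\equiv7\pmod 8$, the ring of integers is $\mathbb{Z}[\sqrt m]$, and the fundamental unit has norm $1$. *)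

theory Defs
  imports Complex_Main "HOL-Number_Theory.Number_Theory"
begin

text \<open>Deng--Li field data: m = l_0 * ... * l_(n-1) (0-based indexing of the primes).\<close>
definition deng_li :: "int list \<Rightarrow> bool" where
  "deng_li ls \<longleftrightarrow>
     (let n = length ls in
      n \<ge> 2 \<and> even n \<and> distinct ls \<and> (\<forall>p\<in>set ls. prime p) \<and>
      ls ! 0 mod 8 = 3 \<and>
      (\<forall>i. 1 \<le> i \<and> i < n \<longrightarrow> ls ! i mod 8 = 5) \<and>
      Legendre (ls ! 0) (ls ! 1) = -1 \<and>
      (\<forall>j. 2 \<le> j \<and> j < n \<longrightarrow> Legendre (ls ! 0) (ls ! j) = 1) \<and>
      (\<forall>i j. 1 \<le> i \<and> i < j \<and> j < n \<longrightarrow> Legendre (ls ! i) (ls ! j) = -1))"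

text \<open>Units of Z[sqrt m] (the ring of integers here): a + b sqrt m with norm +-1.\<close>
definition is_unit_Zsqrt :: "int \<Rightarrow> int \<Rightarrow> int \<Rightarrow> bool" where
  "is_unit_Zsqrt m a b \<longleftrightarrow> a^2 - m * b^2 = 1 \<or> a^2 - m * b^2 = -1"

definition fundamental_unit :: "int \<Rightarrow> int \<Rightarrow> int \<Rightarrow> bool" where
  "fundamental_unit m a b \<longleftrightarrow>
     is_unit_Zsqrt m a b \<and> a + b * sqrt (real_of_int m) > 1 \<and>
     (\<forall>c d. is_unit_Zsqrt m c d \<and> c + d * sqrt (real_of_int m) > 1 \<longrightarrow>
        a + b * sqrt (real_of_int m) \<le> c + d * sqrt (real_of_int m))"

end

theory Submission
  imports Defs "HOL-Computational_Algebra.Nth_Powers"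
begin

(* Since m = 3 (mod 4), the fundamental unit eps = a + b sqrt m has norm 1. If b = 2c were even,
   then a = 2u + 1 with u (u + 1) = m c^2. As u and u + 1 are coprime, m = d e with u = d x^2 and
   u + 1 = e y^2. Reducing e y^2 - d x^2 = 1 modulo the primes l_i gives (e / l_i) = 1 for l_i | d
   and (-d / l_i) = 1 for l_i | e, and the Legendre symbol pattern of a Deng-Li field leaves only
   e = 1. Then eta = y + x sqrt m is a unit with eta^2 = eps, contradicting the minimality of eps. *)

lemma cong_eq_if_signs:
  fixes x y p :: int
  assumes "p > 2" "[x = y] (mod p)" "x \<in> {-1, 0, 1}" "y \<in> {-1, 0, 1}"
  shows "x = y"
proof -
  have "p dvd x - y" using assms(2) by (simp add: cong_iff_dvd_diff)
  moreover have "\<bar>x - y\<bar> < p" using assms by auto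
  ultimately show ?thesis
    using dvd_imp_le_int[of "x - y" p] by (cases "x - y = 0") auto
qed

lemma Legendre_in_signs: "Legendre a p \<in> {-1, 0, 1}"
  by (auto simp: Legendre_def)

lemma euler_criterion_int:
  fixes p :: int
  assumes "prime p" "p > 2"
  shows "[Legendre a p = a ^ nat ((p - 1) div 2)] (mod p)"
proof -
  have "prime (nat p)" using assms(1) prime_int_nat_transfer by blast
  moreover have "2 < nat p" "(nat p - 1) div 2 = nat ((p - 1) div 2)"
    using assms(2) by (simp_all add: nat_div_distrib)
  ultimately show ?thesis using euler_criterion[of "nat p" a] assms(2) by simp
qed

lemma Legendre_mult:
  fixes p :: int
  assumes "prime p" "p > 2"
  shows "Legendre (a * b) p = Legendre a p * Legendre b p"
proof -
  let ?k = "nat ((p - 1) div 2)"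
  have "[Legendre a p * Legendre b p = a ^ ?k * b ^ ?k] (mod p)"
    using euler_criterion_int[OF assms] cong_mult by blast
  then have "[Legendre (a * b) p = Legendre a p * Legendre b p] (mod p)"
    using euler_criterion_int[OF assms, of "a * b"]
    by (metis cong_sym cong_trans power_mult_distrib)
  moreover have "Legendre a p * Legendre b p \<in> {-1, 0, 1}"
    using Legendre_in_signs[of a p] Legendre_in_signs[of b p] by auto
  ultimately show ?thesis using cong_eq_if_signs[OF assms(2)] Legendre_in_signs by blast
qed

lemma Legendre_one: "(p :: int) > 1 \<Longrightarrow> Legendre 1 p = 1"
  unfolding Legendre_def QuadRes_def by (auto simp: cong_def intro: exI[of _ 1])

lemma Legendre_prod:
  fixes p :: int
  assumes "prime p" "p > 2" "finite A"
  shows "Legendre (\<Prod>j\<in>A. f j) p = (\<Prod>j\<in>A. Legendre (f j) p)"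
  using assms(3) by induction (use assms Legendre_one Legendre_mult in auto)

lemma Legendre_cong:
  assumes "[a = b] (mod p)"
  shows "Legendre a p = Legendre b p"
proof -
  have "[a = 0] (mod p) \<longleftrightarrow> [b = 0] (mod p)" "QuadRes p a \<longleftrightarrow> QuadRes p b"
    unfolding QuadRes_def using assms cong_sym cong_trans by blast+
  then show ?thesis unfolding Legendre_def by simp
qed

lemma Legendre_eq_1_if_cong_mult_square:
  fixes p :: int
  assumes "prime p" "p > 2" "[e * y^2 = 1] (mod p)"
  shows "Legendre e p = 1"
proof -
  have "\<not> p dvd y"
  proof
    assume "p dvd y"
    then have "[e * y^2 = 0] (mod p)" by (simp add: cong_0_iff power2_eq_square)
    then have "p dvd 1" using assms(3) by (metis cong_0_iff cong_sym cong_trans)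
    then show False using assms(1) by (simp add: prime_int_iff)
  qed
  then have "Legendre (y^2) p = 1"
    using assms(1) unfolding Legendre_def QuadRes_def
    by (auto simp: cong_0_iff prime_dvd_power_iff intro: cong_refl)
  moreover have "Legendre (e * y^2) p = 1"
    using Legendre_cong[OF assms(3)] Legendre_one assms(2) by simp
  ultimately show ?thesis using Legendre_mult[OF assms(1,2)] by simp
qed

lemma Legendre_minus_one:
  fixes p :: int
  assumes "prime p" "p > 2"
  shows "Legendre (-1) p = (if p mod 4 = 1 then 1 else -1)"
proof -
  have "odd p" using assms by (metis prime_odd_int)
  then have "(p - 1) div 2 \<ge> 0" "even ((p - 1) div 2) \<longleftrightarrow> p mod 4 = 1" using assms by presburger+
  then have "[Legendre (-1) p = (if p mod 4 = 1 then 1 else -1)] (mod p)"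
    using euler_criterion_int[OF assms, of "-1"] by (simp add: even_nat_iff minus_one_power_iff)
  then show ?thesis
    using cong_eq_if_signs[OF assms(2)] Legendre_in_signs by (simp split: if_splits)
qed

lemma Legendre_commute:
  fixes p q :: int
  assumes "prime p" "prime q" "p > 2" "q > 2" "p \<noteq> q" "q mod 4 = 1"
  shows "Legendre p q = Legendre q p"
proof -
  have "\<not> q dvd p" "\<not> p dvd q" using assms by (metis primes_dvd_imp_eq)+
  then have nonzero: "Legendre p q \<noteq> 0" "Legendre q p \<noteq> 0" by (simp_all add: Legendre_def cong_0_iff)
  have "even ((p - 1) div 2 * ((q - 1) div 2))" using assms(6) by presburger
  moreover have "Legendre p q * Legendre q p = (-1) ^ nat ((p - 1) div 2 * ((q - 1) div 2))"
    using Quadratic_Reciprocity_int assms prime_int_nat_transfer by blast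
  ultimately have "Legendre p q * Legendre q p = 1"
    using assms(3,4) by (simp add: even_nat_iff)
  then show ?thesis using nonzero Legendre_in_signs[of p q] Legendre_in_signs[of q p] by auto
qed

lemma prod_signs_eq_minus_one_power:
  fixes f :: "'a \<Rightarrow> int"
  assumes "finite A" "\<forall>j\<in>A. f j = 1 \<or> f j = -1"
  shows "prod f A = (-1) ^ card {j\<in>A. f j = -1}"
proof -
  let ?N = "{j. f j = -1}"
  have "prod f (A \<inter> ?N) = (-1) ^ card (A \<inter> ?N)" by (simp add: prod.cong[of _ _ _ "\<lambda>_. -1"])
  moreover have "prod f (A - ?N) = 1" using assms(2) by (intro prod.neutral) auto
  ultimately show ?thesis using prod.Int_Diff[OF assms(1), of f ?N] by (simp add: Int_def conj_commute)
qed

(* The Legendre symbol (l_i / l_j) of a Deng-Li field for i \<noteq> j (0-based indices); it is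
   symmetric by reciprocity since at most one of l_i, l_j is 3 mod 4. *)
definition deng_li_sign :: "nat \<Rightarrow> nat \<Rightarrow> int" where
  "deng_li_sign i j = (if {i, j} = {0, 1} then -1 else if i = 0 \<or> j = 0 then 1 else -1)"

lemma deng_li_sign_commute: "deng_li_sign i j = deng_li_sign j i"
  unfolding deng_li_sign_def by (auto simp: insert_commute)

lemma prod_deng_li_sign:
  assumes "finite A" "k \<notin> A"
  shows "(\<Prod>j\<in>A. deng_li_sign j k) =
    (-1) ^ card (if k = 0 then A \<inter> {1} else if k = 1 then A else A - {0})"
proof -
  have "{j\<in>A. deng_li_sign j k = -1} = (if k = 0 then A \<inter> {1} else if k = 1 then A else A - {0})"
    using assms(2) by (auto simp: deng_li_sign_def doubleton_eq_iff)
  then show ?thesis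
    using prod_signs_eq_minus_one_power[OF assms(1), of "\<lambda>j. deng_li_sign j k"]
    by (simp add: deng_li_sign_def)
qed

lemma minus_one_power_eq_1_iff: "(-1 :: int) ^ k = 1 \<longleftrightarrow> even k"
  by (simp add: minus_one_power_iff)

lemma deng_li_sign_partition:
  fixes n :: nat and S T :: "nat set"
  assumes "even n" "2 \<le> n" "S \<union> T = {..<n}" "S \<inter> T = {}"
    and S_cond: "\<And>i. i \<in> S \<Longrightarrow> (\<Prod>j\<in>T. deng_li_sign j i) = 1"
    and T_cond: "\<And>i. i \<in> T \<Longrightarrow> (if i = 0 then -1 else 1) * (\<Prod>j\<in>S. deng_li_sign j i) = 1"
  shows "T = {}"
proof (rule ccontr)
  assume "T \<noteq> {}"
  have fin: "finite S" "finite T" using assms(3) by (metis finite_Un finite_lessThan)+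
  have card: "card S + card T = n" using fin assms(3,4) by (metis card_Un_disjoint card_lessThan)
  have S_even: "even (card (if i = 0 then T \<inter> {1} else if i = 1 then T else T - {0}))"
    if "i \<in> S" for i
  proof -
    have "i \<notin> T" using that assms(4) by auto
    then show ?thesis
      using S_cond[OF that] prod_deng_li_sign[OF fin(2)] by (metis minus_one_power_eq_1_iff)
  qed
  have T_odd: "odd (card (if i = 0 then S \<inter> {1} else if i = 1 then S else S - {0})) \<longleftrightarrow> i = 0"
    if "i \<in> T" for i
  proof -
    have "i \<notin> S" using that assms(4) by auto
    then show ?thesis
      using T_cond[OF that] prod_deng_li_sign[OF fin(1), of i]
      by (cases "i = 0") (auto simp: minus_one_power_iff split: if_splits)
  qed
  have "0 \<in> S \<union> T" "1 \<in> S \<union> T" unfolding assms(3) using assms(2) by simp_all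
  then consider "0 \<in> T" | "0 \<in> S" by blast
  then show False
  proof cases
    case 1
    then have "1 \<in> S" using T_odd[OF 1] by (cases "1 \<in> S") auto
    then have "even (card T)" using S_even[of 1] by auto
    then have "even (card S)" using card assms(1) by auto
    then have "S \<noteq> {1}" by auto
    then obtain k where "k \<in> S" "k \<noteq> 1" using \<open>1 \<in> S\<close> by blast
    moreover have "k \<noteq> 0" using 1 \<open>k \<in> S\<close> assms(4) by auto
    ultimately have "even (card T - 1)" using S_even[of k] 1 fin(2) by auto
    moreover have "card T > 0" using \<open>T \<noteq> {}\<close> fin(2) by (simp add: card_gt_0_iff)
    ultimately show False using \<open>even (card T)\<close> by presburger
  next
    case 2
    then have "1 \<notin> T" using S_even[of 0] fin(2) by (auto simp: Int_insert_right split: if_splits)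
    then have "1 \<in> S" using \<open>1 \<in> S \<union> T\<close> by blast
    then have "even (card T)" using S_even[of 1] by auto
    obtain k where "k \<in> T" using \<open>T \<noteq> {}\<close> by auto
    moreover have "k \<noteq> 0" "k \<noteq> 1" using 2 \<open>1 \<in> S\<close> \<open>k \<in> T\<close> assms(4) by auto
    ultimately have "even (card S - 1)" using T_odd[of k] 2 fin(1) by auto
    moreover have "card S > 0" using 2 fin(1) by (auto simp: card_gt_0_iff)
    ultimately show False using \<open>even (card T)\<close> card assms(1) by presburger
  qed
qed

lemma square_mod_4: "(x :: int)^2 mod 4 \<in> {0, 1}"
proof -
  have "x mod 4 \<in> {0, 1, 2, 3}" by auto
  moreover have "x^2 mod 4 = (x mod 4)^2 mod 4" by (simp add: power_mod)
  ultimately show ?thesis by auto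
qed

lemma norm_ne_minus_one_if_mod_4_eq_3:
  fixes m a b :: int
  assumes "m mod 4 = 3"
  shows "a^2 - m * b^2 \<noteq> -1"
proof
  assume "a^2 - m * b^2 = -1"
  then have "a^2 + 1 = m * b^2" by simp
  have "(a^2 mod 4 + 1) mod 4 = (a^2 + 1) mod 4" by (simp add: mod_add_left_eq)
  also have "\<dots> = (m * b^2) mod 4" using \<open>a^2 + 1 = m * b^2\<close> by simp
  also have "\<dots> = (m mod 4 * (b^2 mod 4)) mod 4" by (simp add: mod_mult_eq)
  finally show False using assms square_mod_4[of a] square_mod_4[of b] by auto
qed

lemma coprime_mult_eq_square_int:
  fixes a b c :: int
  assumes "coprime a b" "a > 0" "b > 0" "a * b = c^2"
  shows "\<exists>x \<ge> 0. a = x^2"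
proof -
  have "nat a * nat b = (nat \<bar>c\<bar>)^2" using assms
    by (metis abs_ge_zero nat_mult_distrib nat_power_eq power2_abs less_imp_le)
  moreover have "coprime (nat a) (nat b)" using assms
    by (metis coprime_int_iff int_nat_eq less_imp_le nat_0_le)
  ultimately have "is_nth_power 2 (nat a)"
    using is_nth_power_mult_coprime_natD(1)[of "nat a" "nat b" 2] assms by auto
  then obtain z where "nat a = z^2" by (auto elim: is_nth_powerE)
  then have "a = (int z)^2" using assms by (metis int_nat_eq less_imp_le of_nat_power)
  then show ?thesis by (intro exI[of _ "int z"]) simp
qed

lemma coprime_factors_squares:
  fixes u v d e c :: int
  assumes "coprime u v" "u * v = d * e * c^2" "d dvd u" "e dvd v"
    and "u > 0" "v > 0" "d > 0" "e > 0"
  shows "\<exists>x y. x \<ge> 0 \<and> y \<ge> 0 \<and> u = d * x^2 \<and> v = e * y^2"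
proof -
  obtain u' v' where u': "u = d * u'" and v': "v = e * v'" using assms(3,4) unfolding dvd_def by blast
  have "d * e * (u' * v') = d * e * c^2" using assms(2) unfolding u' v' by (simp add: ac_simps)
  then have "u' * v' = c^2" using assms(7,8) by simp
  moreover have "u' > 0" "v' > 0" using assms(5-8) u' v' by (simp_all add: zero_less_mult_iff)
  moreover have "coprime u' v'" using assms(1) unfolding u' v' by simp
  ultimately obtain x y where "x \<ge> 0" "u' = x^2" "y \<ge> 0" "v' = y^2"
    using coprime_mult_eq_square_int[of u' v' c] coprime_mult_eq_square_int[of v' u' c]
    by (auto simp: ac_simps coprime_commute)
  then show ?thesis using u' v' by blast
qed

lemma unit_gt_1_pos:
  fixes m a b :: int
  assumes "m > 0" "a^2 - m * b^2 = 1" "a + b * sqrt m > 1"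
  shows "a > 0" "b > 0"
proof -
  have "(a - b * sqrt m) * (a + b * sqrt m) = a^2 - m * b^2"
    using assms(1) by (simp add: algebra_simps power2_eq_square)
  then have "a - b * sqrt m = 1 / (a + b * sqrt m)" using assms(2,3) by (simp add: field_simps)
  then have "0 < a - b * sqrt m" "a - b * sqrt m < 1" using assms(3) by auto
  then have "real_of_int a > 0" "b * sqrt m > 0" using assms(3) by linarith+
  then show "a > 0" "b > 0" using assms(1) by (simp_all add: zero_less_mult_iff)
qed

lemma fundamental_unit_not_square:
  assumes "fundamental_unit m a b" "is_unit_Zsqrt m y x"
  shows "(y + x * sqrt m)^2 \<noteq> a + b * sqrt m"
proof
  let ?\<eta> = "y + x * sqrt m"
  assume sq: "?\<eta>^2 = a + b * sqrt m"
  obtain y' x' where unit: "is_unit_Zsqrt m y' x'" and abs: "y' + x' * sqrt m = \<bar>?\<eta>\<bar>"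
  proof (cases "?\<eta> \<ge> 0")
    case True then show ?thesis using that[of y x] assms(2) by simp
  next
    case False then show ?thesis using that[of "-y" "-x"] assms(2) by (simp add: is_unit_Zsqrt_def)
  qed
  have "\<bar>?\<eta>\<bar>^2 > 1" using sq assms(1) unfolding fundamental_unit_def by simp
  then have "\<bar>?\<eta>\<bar> > 1" using power_less_imp_less_base[of 1 2 "\<bar>?\<eta>\<bar>"] by simp
  then have "\<bar>?\<eta>\<bar> < \<bar>?\<eta>\<bar>^2"
    using mult_strict_left_mono[of 1 "\<bar>?\<eta>\<bar>" "\<bar>?\<eta>\<bar>"] by (simp add: power2_eq_square)
  moreover have "a + b * sqrt m \<le> \<bar>?\<eta>\<bar>"
    using assms(1) unit abs \<open>\<bar>?\<eta>\<bar> > 1\<close> unfolding fundamental_unit_def by metis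
  ultimately show False using sq by simp
qed

lemma odd_prime_gt_2:
  fixes p :: int
  assumes "prime p" "odd p"
  shows "p > 2"
  using prime_ge_2_int[OF assms(1)] assms(2) by (cases "p = 2") auto

locale deng_li_primes =
  fixes n :: nat and p :: "nat \<Rightarrow> int"
  assumes even_n: "even n" and two_le_n: "2 \<le> n"
    and prime_p: "\<And>i. i < n \<Longrightarrow> prime (p i)"
    and p_mod_4: "\<And>i. i < n \<Longrightarrow> p i mod 4 = (if i = 0 then 3 else 1)"
    and Legendre_p:
      "\<And>i j. i < n \<Longrightarrow> j < n \<Longrightarrow> i \<noteq> j \<Longrightarrow> Legendre (p j) (p i) = deng_li_sign j i"
begin

definition radicand :: int where
  "radicand = (\<Prod>i<n. p i)"

lemma p_gt_2:
  assumes "i < n"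
  shows "p i > 2"
proof (rule odd_prime_gt_2[OF prime_p[OF assms]])
  have "p i mod 4 = 1 \<or> p i mod 4 = 3" using p_mod_4[OF assms] by simp
  then show "odd (p i)" by presburger
qed

lemma Legendre_minus_one_p: "i < n \<Longrightarrow> Legendre (-1) (p i) = (if i = 0 then -1 else 1)"
  using Legendre_minus_one[OF prime_p p_gt_2] p_mod_4 by simp

lemma radicand_pos: "radicand > 0"
  unfolding radicand_def using p_gt_2 by (intro prod_pos) fastforce

lemma radicand_mod_4: "radicand mod 4 = 3"
proof -
  have "{..<n} = insert 0 {1..<n}" using two_le_n by auto
  then have "radicand = p 0 * (\<Prod>i\<in>{1..<n}. p i)" unfolding radicand_def by simp
  moreover have "[(\<Prod>i\<in>{1..<n}. p i) = 1] (mod 4)"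
    using cong_prod[of "{1..<n}" p "\<lambda>_. 1" 4] p_mod_4 by (simp add: cong_def)
  ultimately have "[radicand = p 0 * 1] (mod 4)" by (simp only: cong_scalar_left)
  then show ?thesis using p_mod_4[of 0] two_le_n by (simp add: cong_def)
qed

lemma Legendre_prod_p:
  assumes "finite A" "A \<subseteq> {..<n}" "i < n" "i \<notin> A"
  shows "Legendre (\<Prod>j\<in>A. p j) (p i) = (\<Prod>j\<in>A. deng_li_sign j i)"
proof -
  have "Legendre (\<Prod>j\<in>A. p j) (p i) = (\<Prod>j\<in>A. Legendre (p j) (p i))"
    by (rule Legendre_prod[OF prime_p p_gt_2 assms(1)]) (rule assms(3))+
  also have "\<dots> = (\<Prod>j\<in>A. deng_li_sign j i)"
    using assms Legendre_p by (intro prod.cong) auto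
  finally show ?thesis .
qed

lemma Legendre_partition_trivial:
  assumes "S \<union> T = {..<n}" "S \<inter> T = {}"
    and S_cond: "\<And>i. i \<in> S \<Longrightarrow> Legendre (\<Prod>j\<in>T. p j) (p i) = 1"
    and T_cond: "\<And>i. i \<in> T \<Longrightarrow> Legendre (- (\<Prod>j\<in>S. p j)) (p i) = 1"
  shows "T = {}"
proof -
  have fin: "finite S" "finite T" using assms(1) by (metis finite_Un finite_lessThan)+
  have sub: "S \<subseteq> {..<n}" "T \<subseteq> {..<n}" using assms(1) by blast+
  show ?thesis
  proof (rule deng_li_sign_partition[OF even_n two_le_n assms(1,2)])
    fix i
    assume "i \<in> S"
    then have "i < n" "i \<notin> T" using assms(1,2) by auto
    then show "(\<Prod>j\<in>T. deng_li_sign j i) = 1"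
      using S_cond[OF \<open>i \<in> S\<close>] Legendre_prod_p[OF fin(2) sub(2) \<open>i < n\<close> \<open>i \<notin> T\<close>] by simp
  next
    fix i
    assume "i \<in> T"
    then have "i < n" "i \<notin> S" using assms(1,2) by auto
    have "Legendre (- (\<Prod>j\<in>S. p j)) (p i) = Legendre (-1 * (\<Prod>j\<in>S. p j)) (p i)" by simp
    also have "\<dots> = Legendre (-1) (p i) * Legendre (\<Prod>j\<in>S. p j) (p i)"
      by (rule Legendre_mult[OF prime_p p_gt_2]) (rule \<open>i < n\<close>)+
    also have "\<dots> = (if i = 0 then -1 else 1) * (\<Prod>j\<in>S. deng_li_sign j i)"
      by (simp only: Legendre_prod_p[OF fin(1) sub(1) \<open>i < n\<close> \<open>i \<notin> S\<close>]
          Legendre_minus_one_p[OF \<open>i < n\<close>])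
    finally show "(if i = 0 then -1 else 1) * (\<Prod>j\<in>S. deng_li_sign j i) = 1"
      using T_cond[OF \<open>i \<in> T\<close>] by metis
  qed
qed

lemma radicand_split:
  assumes "coprime u v" "radicand dvd u * v"
  defines "S \<equiv> {i \<in> {..<n}. p i dvd u}" and "T \<equiv> {i \<in> {..<n}. p i dvd v}"
  shows "S \<union> T = {..<n}" "S \<inter> T = {}" "(\<Prod>i\<in>S. p i) dvd u" "(\<Prod>i\<in>T. p i) dvd v"
proof -
  have p_dvd_uv: "p i dvd u * v" if "i < n" for i
    using that assms(2) unfolding radicand_def by (meson dvd_prodI dvd_trans finite_lessThan lessThan_iff)
  then show "S \<union> T = {..<n}" unfolding S_def T_def using prime_dvd_multD[OF prime_p] by blast
  have not_both: "\<not> (p i dvd u \<and> p i dvd v)" if "i < n" for i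
    using assms(1) prime_p[OF that] by (meson coprime_common_divisor not_prime_unit)
  then show "S \<inter> T = {}" unfolding S_def T_def by auto
  have prod_dvd_uv: "(\<Prod>i\<in>A. p i) dvd u * v" if "A \<subseteq> {..<n}" for A
    using that assms(2) unfolding radicand_def by (meson dvd_trans finite_lessThan prod_dvd_prod_subset)
  have "S \<subseteq> {..<n}" "T \<subseteq> {..<n}" unfolding S_def T_def by auto
  then have "(\<Prod>i\<in>S. p i) dvd u * v" "(\<Prod>i\<in>T. p i) dvd u * v" by (simp_all add: prod_dvd_uv)
  moreover have "coprime (\<Prod>i\<in>S. p i) v" "coprime (\<Prod>i\<in>T. p i) u"
    using not_both prime_p unfolding S_def T_def by (auto intro!: prod_coprime_left prime_imp_coprime)
  ultimately show "(\<Prod>i\<in>S. p i) dvd u" "(\<Prod>i\<in>T. p i) dvd v"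
    by (simp_all add: coprime_dvd_mult_left_iff coprime_dvd_mult_right_iff)
qed

lemma consecutive_product_split:
  assumes "u > 0" "u * (u + 1) = radicand * c^2"
  shows "\<exists>x y. x \<ge> 0 \<and> y \<ge> 0 \<and> u = radicand * x^2 \<and> u + 1 = y^2"
proof -
  define S where "S = {i \<in> {..<n}. p i dvd u}"
  define T where "T = {i \<in> {..<n}. p i dvd u + 1}"
  define d where "d = (\<Prod>i\<in>S. p i)"
  define e where "e = (\<Prod>i\<in>T. p i)"
  have cop: "coprime u (u + 1)" by simp
  have dvd: "radicand dvd u * (u + 1)" using assms(2) by simp
  have split: "S \<union> T = {..<n}" "S \<inter> T = {}" "d dvd u" "e dvd u + 1"
    unfolding S_def T_def d_def e_def by (rule radicand_split[OF cop dvd])+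
  have fin: "finite S" "finite T" using split(1) by (metis finite_Un finite_lessThan)+
  have de: "d * e = radicand"
    unfolding d_def e_def radicand_def split(1)[symmetric]
    by (rule prod.union_disjoint[OF fin split(2), symmetric])
  have "d > 0" "e > 0"
    unfolding d_def e_def by (intro prod_pos; auto simp: S_def T_def dest!: p_gt_2)+
  moreover have "u * (u + 1) = d * e * c^2" "u + 1 > 0" using assms de by simp_all
  ultimately obtain x y where xy: "x \<ge> 0" "y \<ge> 0" "u = d * x^2" "u + 1 = e * y^2"
    using coprime_factors_squares[OF cop _ split(3,4) assms(1)] by blast
  have "T = {}"
  proof (rule Legendre_partition_trivial[OF split(1,2)])
    fix i
    assume "i \<in> S"
    moreover have "e * y^2 - 1 = u" using xy(4) by simp
    ultimately have "i < n" "p i dvd e * y^2 - 1" by (auto simp: S_def)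
    then show "Legendre (\<Prod>j\<in>T. p j) (p i) = 1"
      unfolding e_def[symmetric]
      by (intro Legendre_eq_1_if_cong_mult_square prime_p p_gt_2) (simp_all add: cong_iff_dvd_diff)
  next
    fix i
    assume "i \<in> T"
    then have "i < n" "p i dvd u + 1" by (auto simp: T_def)
    moreover have "(- d) * x^2 - 1 = - (u + 1)" using xy(3) by simp
    ultimately have "p i dvd (- d) * x^2 - 1" by (metis dvd_minus_iff)
    with \<open>i < n\<close> show "Legendre (- (\<Prod>j\<in>S. p j)) (p i) = 1"
      unfolding d_def[symmetric]
      by (intro Legendre_eq_1_if_cong_mult_square prime_p p_gt_2) (simp_all add: cong_iff_dvd_diff)
  qed
  then have "e = 1" "d = radicand" using de by (simp_all add: e_def)
  with xy show ?thesis by auto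
qed

lemma even_norm_one_is_square:
  assumes "a^2 - radicand * b^2 = 1" "a > 0" "b > 0" "even b"
  shows "\<exists>x y. is_unit_Zsqrt radicand y x \<and> (y + x * sqrt radicand)^2 = a + b * sqrt radicand"
proof -
  obtain c where c: "b = 2 * c" using assms(4) by blast
  have a2: "a^2 = 1 + 4 * (radicand * c^2)" using assms(1) unfolding c by (simp add: power_mult_distrib)
  then have "odd (a^2)" by simp
  then have "odd a" by simp
  then obtain u where u: "a = 2 * u + 1" using oddE by blast
  have prod_eq: "u * (u + 1) = radicand * c^2"
    using a2 unfolding u by (simp add: power2_eq_square algebra_simps)
  have "c > 0" using assms(3) c by simp
  then have "u \<noteq> 0" using prod_eq radicand_pos by auto
  moreover have "u \<ge> 0" using assms(2) u by simp
  ultimately obtain x y where xy: "x \<ge> 0" "y \<ge> 0" "u = radicand * x^2" "u + 1 = y^2"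
    using consecutive_product_split[OF _ prod_eq] by fastforce
  have "radicand * (x * y)^2 = radicand * c^2"
    using prod_eq xy by (simp add: power_mult_distrib)
  then have "(x * y)^2 = c^2" using radicand_pos by simp
  then have xyc: "x * y = c" using xy(1,2) \<open>c > 0\<close> by (simp add: power2_eq_iff_nonneg)
  have unit: "is_unit_Zsqrt radicand y x" using xy unfolding is_unit_Zsqrt_def by simp
  have ints: "y^2 + radicand * x^2 = a" "2 * (x * y) = b" using xy u c xyc by simp_all
  have "(y + x * sqrt radicand)^2 =
      real_of_int (y^2 + radicand * x^2) + real_of_int (2 * (x * y)) * sqrt radicand"
    using radicand_pos by (simp add: power2_eq_square algebra_simps)
  then show ?thesis using unit unfolding ints by blast
qed

end

lemma deng_li_primes_nth:
  assumes "deng_li ls"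
  shows "deng_li_primes (length ls) (nth ls)"
proof -
  let ?n = "length ls" and ?p = "nth ls"
  have n: "even ?n" "2 \<le> ?n" and dist: "distinct ls" and prime: "\<And>i. i < ?n \<Longrightarrow> prime (?p i)"
    and mod_8: "\<And>i. i < ?n \<Longrightarrow> ?p i mod 8 = (if i = 0 then 3 else 5)"
    and L01: "Legendre (?p 0) (?p 1) = -1"
    and L0j: "\<And>j. 2 \<le> j \<Longrightarrow> j < ?n \<Longrightarrow> Legendre (?p 0) (?p j) = 1"
    and Lij: "\<And>i j. 1 \<le> i \<Longrightarrow> i < j \<Longrightarrow> j < ?n \<Longrightarrow> Legendre (?p i) (?p j) = -1"
    using assms unfolding deng_li_def Let_def by auto
  have mod_4: "?p i mod 4 = (if i = 0 then 3 else 1)" if "i < ?n" for i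
    using mod_8[OF that] by (cases "i = 0") presburger+
  have gt_2: "?p i > 2" if "i < ?n" for i
    using mod_4[OF that] by (intro odd_prime_gt_2 prime[OF that]) presburger
  have Legendre_lt: "Legendre (?p i) (?p j) = deng_li_sign i j" if "i < j" "j < ?n" for i j
    using that L01 L0j Lij by (cases "i = 0"; cases "j = 1") (auto simp: deng_li_sign_def)
  show ?thesis
  proof
    fix i j
    assume ij: "i < ?n" "j < ?n" "i \<noteq> j"
    show "Legendre (?p j) (?p i) = deng_li_sign j i"
    proof (cases "j < i")
      case True
      then show ?thesis using Legendre_lt ij by blast
    next
      case False
      then have "i < j" using ij by simp
      have "?p i \<noteq> ?p j" using dist ij by (simp add: nth_eq_iff_index_eq)
      then have "Legendre (?p i) (?p j) = Legendre (?p j) (?p i)"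
        using \<open>i < j\<close> ij prime gt_2 mod_4 by (intro Legendre_commute) auto
      then show ?thesis using Legendre_lt[OF \<open>i < j\<close> ij(2)] deng_li_sign_commute by simp
    qed
  qed (use n prime mod_4 in auto)
qed

theorem lemma5p3:
  fixes ls :: "int list" and a b :: int
  assumes "deng_li ls"
    and "fundamental_unit (prod_list ls) a b"
  shows "odd b"
proof -
  interpret deng_li_primes "length ls" "nth ls"
    using assms(1) by (rule deng_li_primes_nth)
  have fu: "fundamental_unit radicand a b"
    using assms(2) by (simp add: radicand_def prod.list_conv_set_nth atLeast0LessThan)
  then have norm: "a^2 - radicand * b^2 = 1"
    using norm_ne_minus_one_if_mod_4_eq_3[OF radicand_mod_4]
    unfolding fundamental_unit_def is_unit_Zsqrt_def by blast
  moreover have "a > 0" "b > 0"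
    using unit_gt_1_pos[OF radicand_pos norm] fu unfolding fundamental_unit_def by blast+
  ultimately show "odd b"
    using even_norm_one_is_square fundamental_unit_not_square[OF fu] by blast
qed

end
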